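(* Let $k\ge 2$ be an integer and $\varepsilon>0$. There exist constants $c=c(k,\varepsilon)>0$ and $n_0=n_0(k,\varepsilon)$ such that every graph $G$ on $n\ge n_0$ vertices with \[ q(G)\ge \left(1-\frac{1}{k}+\varepsilon\right)2n \] contains at least $c\,n^{k+1}$ copies of the complete graph $K_{k+1}$.
   Context: All graphs are finite, simple and undirected. For a graph $G$, $D(G)$ is the diagonal matrix of vertex degrees and $A(G)$ is the adjacency matrix; the signless Laplacian is $Q(G)=D(G)+A(G)$, and $q(G)$ denotes the largest eigenvalue of $Q(G)$ (the signless Laplacian spectral radius). $K_{k+1}$ is the complete graph on $k+1$ vertices; a copy of $K_{k+1}$ in $G$ is a set of $k+1$ pairwise adjacent vertices. *)

theory Defs
  imports "Jordan_Normal_Form.Char_Poly"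
begin

definition simple_graph :: "nat \<Rightarrow> (nat \<Rightarrow> nat \<Rightarrow> bool) \<Rightarrow> bool" where
  "simple_graph n E \<longleftrightarrow>
     (\<forall>i<n. \<forall>j<n. E i j \<longleftrightarrow> E j i) \<and> (\<forall>i<n. \<not> E i i)"

definition degree :: "nat \<Rightarrow> (nat \<Rightarrow> nat \<Rightarrow> bool) \<Rightarrow> nat \<Rightarrow> nat" where
  "degree n E i = card {j. j < n \<and> E i j}"

definition adj_matrix :: "nat \<Rightarrow> (nat \<Rightarrow> nat \<Rightarrow> bool) \<Rightarrow> real mat" where
  "adj_matrix n E = mat n n (\<lambda>(i, j). if E i j then 1 else 0)"

definition deg_matrix :: "nat \<Rightarrow> (nat \<Rightarrow> nat \<Rightarrow> bool) \<Rightarrow> real mat" where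
  "deg_matrix n E = mat n n (\<lambda>(i, j). if i = j then real (degree n E i) else 0)"

definition signless_laplacian :: "nat \<Rightarrow> (nat \<Rightarrow> nat \<Rightarrow> bool) \<Rightarrow> real mat" where
  "signless_laplacian n E = deg_matrix n E + adj_matrix n E"

text \<open>q(G): the largest eigenvalue of Q(G) (Q is real symmetric, so all its
eigenvalues are real).\<close>
definition q_radius :: "nat \<Rightarrow> (nat \<Rightarrow> nat \<Rightarrow> bool) \<Rightarrow> real" where
  "q_radius n E = Max {x. eigenvalue (signless_laplacian n E) x}"

definition clique_count :: "nat \<Rightarrow> (nat \<Rightarrow> nat \<Rightarrow> bool) \<Rightarrow> nat \<Rightarrow> nat" where
  "clique_count n E r = card {S. S \<subseteq> {0..<n} \<and> card S = r \<and>
                                  (\<forall>x\<in>S. \<forall>y\<in>S. x \<noteq> y \<longrightarrow> E x y)}"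

end

theory Submission
  imports Defs "HOL-Analysis.Convex"
begin

(* Let y be an eigenvector of Q(G) for q = q(G), so that the sum over ordered adjacent pairs of
   (y u + y v)^2 equals 2 q |y|^2. Averaging over all m-subsets M of the vertices expresses this
   quantity through the same sums restricted to G[M]. If G[M] has no K_{k+1}, a weighted
   Motzkin--Straus inequality (combined with Caro--Wei) bounds the restricted sum by
   4 (1 - 1/k) m |y_M|^2; otherwise the trivial bound 4 m |y_M|^2 holds. Since q exceeds every
   degree by at least 2 eps n, the eigenvector is spread out (y_u^2 <= |y|^2 / (4 eps^2 n)), so
   the extra contribution of the subsets containing a K_{k+1} is small unless there are many of
   them: for m of order 1/eps a positive fraction of all m-subsets contains a K_{k+1}, and each
   K_{k+1} lies in only (n-k-1 choose m-k-1) of them. *)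

section \<open>Cliques and the Caro--Wei bound\<close>

definition graph_on :: "'a set \<Rightarrow> ('a \<Rightarrow> 'a \<Rightarrow> bool) \<Rightarrow> bool" where
  "graph_on S E \<longleftrightarrow> (\<forall>a\<in>S. \<forall>b\<in>S. E a b = E b a) \<and> (\<forall>a\<in>S. \<not> E a a)"

definition clique :: "('a \<Rightarrow> 'a \<Rightarrow> bool) \<Rightarrow> 'a set \<Rightarrow> bool" where
  "clique E C \<longleftrightarrow> (\<forall>a\<in>C. \<forall>b\<in>C. a \<noteq> b \<longrightarrow> E a b)"

definition clique_number_le :: "('a \<Rightarrow> 'a \<Rightarrow> bool) \<Rightarrow> 'a set \<Rightarrow> nat \<Rightarrow> bool" where
  "clique_number_le E S k \<longleftrightarrow> (\<forall>C\<subseteq>S. clique E C \<longrightarrow> card C \<le> k)"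

definition degree_in :: "('a \<Rightarrow> 'a \<Rightarrow> bool) \<Rightarrow> 'a set \<Rightarrow> 'a \<Rightarrow> nat" where
  "degree_in E S u = card {v\<in>S. E u v}"

definition non_degree_in :: "('a \<Rightarrow> 'a \<Rightarrow> bool) \<Rightarrow> 'a set \<Rightarrow> 'a \<Rightarrow> nat" where
  "non_degree_in E S u = card {v\<in>S. v = u \<or> \<not> E u v}"

lemma graph_on_subset: "graph_on S E \<Longrightarrow> T \<subseteq> S \<Longrightarrow> graph_on T E"
  unfolding graph_on_def by blast

lemma clique_number_le_subset: "clique_number_le E S k \<Longrightarrow> T \<subseteq> S \<Longrightarrow> clique_number_le E T k"
  unfolding clique_number_le_def by blast

lemma graph_on_simple_graph: "simple_graph n E \<Longrightarrow> graph_on {0..<n} E"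
  unfolding simple_graph_def graph_on_def by auto

lemma degree_in_le_card: "finite S \<Longrightarrow> degree_in E S u \<le> card S"
  unfolding degree_in_def by (rule card_mono) auto

lemma degree_in_add_non_degree_in:
  assumes "finite S" "graph_on S E" "u \<in> S"
  shows "degree_in E S u + non_degree_in E S u = card S"
proof -
  have "\<not> E u u" using assms unfolding graph_on_def by auto
  then have "{v\<in>S. E u v} \<inter> {v\<in>S. v = u \<or> \<not> E u v} = {}"
    "{v\<in>S. E u v} \<union> {v\<in>S. v = u \<or> \<not> E u v} = S"
    by auto
  then show ?thesis unfolding degree_in_def non_degree_in_def
    using assms(1) by (metis card_Un_disjoint finite_Un)
qed

lemma non_degree_in_pos: "finite S \<Longrightarrow> u \<in> S \<Longrightarrow> non_degree_in E S u > 0"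
  unfolding non_degree_in_def by (subst card_gt_0_iff) auto

lemma clique_number_le_neighbourhood:
  assumes "graph_on S E" "u \<in> S" "clique_number_le E S (Suc k)"
  shows "clique_number_le E {v\<in>S. E u v} k"
  unfolding clique_number_le_def
proof (intro allI impI)
  fix C assume C: "C \<subseteq> {v\<in>S. E u v}" "clique E C"
  have "\<not> E u u" using assms(1,2) unfolding graph_on_def by auto
  then have uC: "clique E (insert u C)" "insert u C \<subseteq> S" "u \<notin> C"
    using C assms(1,2) unfolding clique_def graph_on_def by auto
  show "card C \<le> k"
  proof (cases "finite C")
    case True
    then have "card (insert u C) = Suc (card C)" using uC(3) by simp
    then show ?thesis using assms(3) uC(1,2) unfolding clique_number_le_def by (metis Suc_le_mono)
  qed simp
qed

lemma caro_wei_bound: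
  assumes "finite S" "graph_on S E" "clique_number_le E S k"
  shows "(\<Sum>u\<in>S. 1 / real (non_degree_in E S u)) \<le> real k"
  using assms
proof (induction k arbitrary: S)
  case 0
  have "S = {}"
  proof (rule ccontr)
    assume "S \<noteq> {}"
    then obtain u where "{u} \<subseteq> S" by auto
    moreover have "clique E {u}" unfolding clique_def by simp
    ultimately have "card {u} \<le> 0" using "0.prems"(3) unfolding clique_number_le_def by blast
    then show False by simp
  qed
  then show ?case by simp
next
  case (Suc k)
  show ?case
  proof (cases "S = {}")
    case False
    \<comment> \<open>remove a vertex \<open>u\<close> of minimal non-degree together with its non-neighbours\<close>
    obtain u where u: "u \<in> S" "\<And>w. w \<in> S \<Longrightarrow> non_degree_in E S u \<le> non_degree_in E S w"
      using arg_min_if_finite(1) arg_min_least Suc.prems(1) False by metis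
    define T where "T = {v\<in>S. v = u \<or> \<not> E u v}"
    define N where "N = {v\<in>S. E u v}"
    have "\<not> E u u" using Suc.prems(2) u(1) unfolding graph_on_def by auto
    then have split: "S = T \<union> N" "T \<inter> N = {}" "finite T" "finite N"
      using Suc.prems(1) unfolding T_def N_def by auto
    have t_pos: "non_degree_in E S u > 0" by (rule non_degree_in_pos[OF Suc.prems(1) u(1)])
    have "(\<Sum>v\<in>T. 1 / real (non_degree_in E S v)) \<le> (\<Sum>v\<in>T. 1 / real (non_degree_in E S u))"
      using u(2) t_pos unfolding T_def by (intro sum_mono) (simp add: frac_le)
    also have "\<dots> = 1" using t_pos unfolding T_def non_degree_in_def by simp
    finally have sum_T: "(\<Sum>v\<in>T. 1 / real (non_degree_in E S v)) \<le> 1" .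
    have "(\<Sum>v\<in>N. 1 / real (non_degree_in E S v)) \<le> (\<Sum>v\<in>N. 1 / real (non_degree_in E N v))"
    proof (rule sum_mono)
      fix v assume v: "v \<in> N"
      have "non_degree_in E N v \<le> non_degree_in E S v"
        unfolding non_degree_in_def N_def using Suc.prems(1) by (intro card_mono) auto
      then show "1 / real (non_degree_in E S v) \<le> 1 / real (non_degree_in E N v)"
        using non_degree_in_pos[OF split(4) v] by (simp add: frac_le)
    qed
    also have "\<dots> \<le> real k"
    proof (rule Suc.IH[OF split(4)])
      show "graph_on N E" using Suc.prems(2) by (rule graph_on_subset) (auto simp: N_def)
      show "clique_number_le E N k"
        unfolding N_def by (rule clique_number_le_neighbourhood[OF Suc.prems(2) u(1) Suc.prems(3)])
    qed
    finally show ?thesis using sum_T split by (simp add: sum.union_disjoint)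
  qed simp
qed

section \<open>The Motzkin--Straus inequality\<close>

definition adj_sum :: "('a \<Rightarrow> 'a \<Rightarrow> bool) \<Rightarrow> 'a set \<Rightarrow> ('a \<Rightarrow> real) \<Rightarrow> 'a \<Rightarrow> real" where
  "adj_sum E S y u = (\<Sum>v\<in>S. if E u v then y v else 0)"

text \<open>With \<open>A\<close> and \<open>Q\<close> the adjacency and signless Laplacian matrices of the graph induced
  on \<open>S\<close>, \<open>adj_form E S y = y\<^sup>T A y\<close> and \<open>signless_form E S y = 2 y\<^sup>T Q y\<close>.\<close>

definition adj_form :: "('a \<Rightarrow> 'a \<Rightarrow> bool) \<Rightarrow> 'a set \<Rightarrow> ('a \<Rightarrow> real) \<Rightarrow> real" where
  "adj_form E S y = (\<Sum>u\<in>S. \<Sum>v\<in>S. if E u v then y u * y v else 0)"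

definition signless_form :: "('a \<Rightarrow> 'a \<Rightarrow> bool) \<Rightarrow> 'a set \<Rightarrow> ('a \<Rightarrow> real) \<Rightarrow> real" where
  "signless_form E S y = (\<Sum>u\<in>S. \<Sum>v\<in>S. if E u v then (y u + y v)\<^sup>2 else 0)"

lemma sum_adj_left:
  assumes "finite S"
  shows "(\<Sum>u\<in>S. \<Sum>v\<in>S. if E u v then h u else 0) = (\<Sum>u\<in>S. real (degree_in E S u) * h u)"
  unfolding degree_in_def using assms by (intro sum.cong) (auto simp: sum.If_cases Int_def)

lemma sum_adj_right:
  assumes "finite S" "graph_on S E"
  shows "(\<Sum>u\<in>S. \<Sum>v\<in>S. if E u v then h v else 0) = (\<Sum>u\<in>S. real (degree_in E S u) * h u)"
proof -
  have "(\<Sum>u\<in>S. \<Sum>v\<in>S. if E u v then h v else 0) = (\<Sum>v\<in>S. \<Sum>u\<in>S. if E v u then h v else 0)"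
    using assms(2) unfolding graph_on_def by (subst sum.swap) (intro sum.cong, auto)
  then show ?thesis using sum_adj_left[OF assms(1)] by simp
qed

lemma signless_form_expand:
  assumes "finite S" "graph_on S E"
  shows "signless_form E S y = 2 * (\<Sum>u\<in>S. real (degree_in E S u) * (y u)\<^sup>2) + 2 * adj_form E S y"
proof -
  have "signless_form E S y = (\<Sum>u\<in>S. \<Sum>v\<in>S. (if E u v then (y u)\<^sup>2 else 0)
      + (if E u v then (y v)\<^sup>2 else 0) + 2 * (if E u v then y u * y v else 0))"
    unfolding signless_form_def by (intro sum.cong) (auto simp: power2_eq_square algebra_simps)
  also have "\<dots> = (\<Sum>u\<in>S. \<Sum>v\<in>S. if E u v then (y u)\<^sup>2 else 0)
      + (\<Sum>u\<in>S. \<Sum>v\<in>S. if E u v then (y v)\<^sup>2 else 0) + 2 * adj_form E S y"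
    unfolding adj_form_def by (simp add: sum.distrib sum_distrib_left)
  finally show ?thesis using sum_adj_left[OF assms(1)] sum_adj_right[OF assms] by simp
qed

lemma adj_form_eq_sum_adj_sum: "adj_form E S y = (\<Sum>u\<in>S. y u * adj_sum E S y u)"
  unfolding adj_form_def adj_sum_def by (simp add: sum_distrib_left if_distrib cong: if_cong)

lemma adj_sum_remove_nonadjacent:
  "finite S \<Longrightarrow> \<not> E u v \<Longrightarrow> adj_sum E (S - {v}) y u = adj_sum E S y u"
  unfolding adj_sum_def by (cases "v \<in> S") (simp_all add: sum.remove)

lemma adj_form_remove:
  assumes "finite S" "a \<in> S" "graph_on S E"
  shows "adj_form E S y = adj_form E (S - {a}) y + 2 * y a * adj_sum E (S - {a}) y a"
proof -
  let ?h = "\<lambda>u v. if E u v then y u * y v else 0"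
  have irr: "\<not> E a a" using assms unfolding graph_on_def by auto
  have row: "(\<Sum>v\<in>S. ?h u v) = ?h u a + (\<Sum>v\<in>S-{a}. ?h u v)" for u
    by (rule sum.remove[OF assms(1,2)])
  have col: "(\<Sum>u\<in>S-{a}. ?h u a) = (\<Sum>v\<in>S-{a}. ?h a v)"
    using assms(2,3) unfolding graph_on_def by (intro sum.cong) (auto simp: mult.commute)
  have "adj_form E S y = (\<Sum>v\<in>S. ?h a v) + (\<Sum>u\<in>S-{a}. ?h u a + (\<Sum>v\<in>S-{a}. ?h u v))"
    unfolding adj_form_def row[symmetric] by (rule sum.remove[OF assms(1,2)])
  also have "\<dots> = 2 * (\<Sum>v\<in>S-{a}. ?h a v) + adj_form E (S - {a}) y"
    using row[of a] irr col unfolding adj_form_def by (simp add: sum.distrib)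
  also have "(\<Sum>v\<in>S-{a}. ?h a v) = y a * adj_sum E (S - {a}) y a"
    unfolding adj_sum_def by (simp add: sum_distrib_left if_distrib cong: if_cong)
  finally show ?thesis by simp
qed

lemma adj_form_clique:
  assumes "finite S" "graph_on S E" "clique E S"
  shows "adj_form E S y = (\<Sum>u\<in>S. y u)\<^sup>2 - (\<Sum>u\<in>S. (y u)\<^sup>2)"
proof -
  have "adj_form E S y = (\<Sum>u\<in>S. \<Sum>v\<in>S. y u * y v - (if u = v then y u * y v else 0))"
    unfolding adj_form_def using assms(2,3) unfolding graph_on_def clique_def
    by (intro sum.cong) auto
  also have "\<dots> = (\<Sum>u\<in>S. y u)\<^sup>2 - (\<Sum>u\<in>S. (y u)\<^sup>2)"
    using assms(1) by (simp add: sum_subtractf power2_eq_square sum_product)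
  finally show ?thesis .
qed

lemma adj_form_le_abs: "adj_form E S y \<le> adj_form E S (\<lambda>u. \<bar>y u\<bar>)"
  unfolding adj_form_def by (intro sum_mono) (auto simp: abs_mult[symmetric])

lemma adj_form_merge_nonadjacent:
  assumes fin: "finite S" and graph: "graph_on S E" and uv: "u \<in> S" "v \<in> S" "u \<noteq> v" "\<not> E u v"
    and "0 \<le> y v" and le: "adj_sum E S y v \<le> adj_sum E S y u"
  shows "adj_form E S y \<le> adj_form E (S - {v}) (y(u := y u + y v))"
proof -
  define S' where "S' = S - {v}"
  define y' where "y' = y(u := y u + y v)"
  have u: "u \<in> S'" and fin': "finite S'" and graph': "graph_on S' E"
    using uv fin graph_on_subset[OF graph] unfolding S'_def by auto
  have irr: "\<not> E u u" "\<not> E v v" using graph uv unfolding graph_on_def by auto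
  have Av: "adj_sum E S' y v = adj_sum E S y v"
    unfolding S'_def using adj_sum_remove_nonadjacent[OF fin, of E v v] irr(2) by simp
  have Au: "adj_sum E (S' - {u}) y u = adj_sum E S y u"
    using adj_sum_remove_nonadjacent[of S' E u u y] adj_sum_remove_nonadjacent[OF fin, of E u v y]
      fin' irr uv(4) unfolding S'_def by simp
  have "adj_form E S y = adj_form E (S' - {u}) y + 2 * y u * adj_sum E S y u + 2 * y v * adj_sum E S y v"
    using adj_form_remove[OF fin uv(2) graph, of y] adj_form_remove[OF fin' u graph', of y] Av Au
    unfolding S'_def by simp
  also have "\<dots> \<le> adj_form E (S' - {u}) y + 2 * (y u + y v) * adj_sum E S y u"
    using le \<open>0 \<le> y v\<close> by (simp add: algebra_simps mult_left_mono)
  also have "\<dots> = adj_form E S' y'"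
  proof -
    have "adj_form E (S' - {u}) y' = adj_form E (S' - {u}) y"
      unfolding adj_form_def y'_def by (intro sum.cong refl) auto
    moreover have "adj_sum E (S' - {u}) y' u = adj_sum E (S' - {u}) y u"
      unfolding adj_sum_def y'_def by (intro sum.cong refl) auto
    ultimately show ?thesis using adj_form_remove[OF fin' u graph', of y'] Au by (simp add: y'_def)
  qed
  finally show ?thesis unfolding S'_def y'_def .
qed

lemma sum_merge_weights:
  assumes "finite S" "u \<in> S" "v \<in> S" "u \<noteq> v"
  shows "(\<Sum>w\<in>S - {v}. (y(u := y u + y v)) w) = (\<Sum>w\<in>S. y w)"
proof -
  have "(\<Sum>w\<in>S - {v}. (y(u := y u + y v)) w) = y v + (\<Sum>w\<in>S - {v}. y w)"
    using assms by (simp add: sum.remove[of "S - {v}" u] sum.remove[of "S - {v}" u y] algebra_simps)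
  also have "\<dots> = (\<Sum>w\<in>S. y w)" using assms by (simp add: sum.remove[of S v])
  finally show ?thesis .
qed

lemma motzkin_straus:
  assumes "finite S" "graph_on S E" "clique_number_le E S k" "k \<ge> 1" "\<forall>u\<in>S. y u \<ge> 0"
  shows "adj_form E S y \<le> (1 - 1 / real k) * (\<Sum>u\<in>S. y u)\<^sup>2"
  using assms
proof (induction "card S" arbitrary: S y rule: less_induct)
  case less
  show ?case
  proof (cases "clique E S")
    case True
    then have "card S \<le> k" using less.prems(3) unfolding clique_number_le_def by auto
    have "(\<Sum>u\<in>S. y u)\<^sup>2 \<le> (\<Sum>u\<in>S. (y u)\<^sup>2) * card S"
      by (rule sum_squared_le_sum_of_squares)
    also have "\<dots> \<le> (\<Sum>u\<in>S. (y u)\<^sup>2) * k"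
      using \<open>card S \<le> k\<close> by (intro mult_left_mono) (auto simp: sum_nonneg)
    finally have "(\<Sum>u\<in>S. y u)\<^sup>2 / k \<le> (\<Sum>u\<in>S. (y u)\<^sup>2)"
      using less.prems(4) by (simp add: divide_le_eq)
    then show ?thesis
      using adj_form_clique[OF less.prems(1,2) True, of y] by (simp add: algebra_simps)
  next
    case False
    then obtain a b where ab: "a \<in> S" "b \<in> S" "a \<noteq> b" "\<not> E a b" "\<not> E b a"
      using less.prems(2) unfolding clique_def graph_on_def by blast
    obtain u v where uv: "u \<in> S" "v \<in> S" "u \<noteq> v" "\<not> E u v"
      and le: "adj_sum E S y v \<le> adj_sum E S y u"
      using ab by (metis linorder_le_cases)
    have "adj_form E S y \<le> adj_form E (S - {v}) (y(u := y u + y v))"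
      using less.prems uv le by (intro adj_form_merge_nonadjacent) auto
    also have "\<dots> \<le> (1 - 1 / real k) * (\<Sum>w\<in>S - {v}. (y(u := y u + y v)) w)\<^sup>2"
    proof (rule less.hyps)
      show "card (S - {v}) < card S" using less.prems(1) uv(2) by (rule card_Diff1_less)
      show "graph_on (S - {v}) E" "clique_number_le E (S - {v}) k"
        using graph_on_subset[OF less.prems(2)] clique_number_le_subset[OF less.prems(3)] by auto
    qed (use less.prems uv in auto)
    also have "\<dots> = (1 - 1 / real k) * (\<Sum>u\<in>S. y u)\<^sup>2"
      by (simp only: sum_merge_weights[OF less.prems(1) uv(1-3)])
    finally show ?thesis .
  qed
qed

section \<open>A spectral Turan bound for induced subgraphs\<close>

text \<open>The tangent line of the convex function \<open>t \<mapsto> 1 / (t + (1 - 2/k) s)\<close>, viewed as a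
  function of \<open>1/t\<close>, at the point \<open>t = s/k\<close>.\<close>

lemma inverse_shifted_le_tangent:
  fixes t s k :: real
  assumes "t > 0" "s > 0" "k \<ge> 2"
  shows "1 / (t + (1 - 2/k) * s) \<le> k / (s * (k - 1)) + (1/t - k/s) / (k - 1)\<^sup>2"
proof -
  define K where "K = k - 1"
  define N where "N = k * t * K + s - k * t"
  define D where "D = s * t * K\<^sup>2"
  define P where "P = k * t + (k - 2) * s"
  have "K > 0" "D > 0" "P > 0" using assms unfolding K_def D_def P_def by (auto intro: add_pos_nonneg)
  have rhs: "k / (s * K) + (1/t - k/s) / K\<^sup>2 = N / D"
    using assms \<open>K > 0\<close> unfolding N_def D_def by (simp add: field_simps power2_eq_square)
  have lhs: "1 / (t + (1 - 2/k) * s) = k / P"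
    using assms unfolding P_def by (simp add: field_simps)
  have "N * P - k * D = (k - 2) * (s - k * t)\<^sup>2"
    unfolding N_def P_def D_def K_def by (simp add: power2_eq_square algebra_simps)
  also have "\<dots> \<ge> 0" using assms by simp
  finally have "k / P \<le> N / D"
    using \<open>D > 0\<close> \<open>P > 0\<close> by (simp add: divide_simps mult.commute)
  then show ?thesis using rhs lhs unfolding K_def by simp
qed

lemma sum_inverse_shifted_le:
  fixes t :: "'a \<Rightarrow> real" and k :: real
  assumes "finite S" "\<And>u. u \<in> S \<Longrightarrow> t u > 0" "(\<Sum>u\<in>S. 1 / t u) \<le> k" "k \<ge> 2"
  shows "(\<Sum>u\<in>S. 1 / (t u + (1 - 2/k) * card S)) \<le> k / (k - 1)"
proof (cases "S = {}")
  case False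
  define s where "s = real (card S)"
  have "s > 0" using assms(1) False unfolding s_def by (simp add: card_gt_0_iff)
  have "(\<Sum>u\<in>S. 1 / (t u + (1 - 2/k) * s))
      \<le> (\<Sum>u\<in>S. k / (s * (k - 1)) + (1 / t u - k/s) / (k - 1)\<^sup>2)"
    using assms(2,4) \<open>s > 0\<close> by (intro sum_mono inverse_shifted_le_tangent) auto
  also have "\<dots> = k / (k - 1) + ((\<Sum>u\<in>S. 1 / t u) - k) / (k - 1)\<^sup>2"
    using \<open>s > 0\<close> unfolding s_def
    by (simp add: sum.distrib sum_subtractf sum_divide_distrib[symmetric])
  also have "\<dots> \<le> k / (k - 1)"
    using assms(3) by (simp add: divide_nonpos_nonneg)
  finally show ?thesis unfolding s_def .
qed (use assms in simp)

lemma weighted_Cauchy_Schwarz: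
  fixes z w :: "'a \<Rightarrow> real"
  assumes "\<And>u. u \<in> S \<Longrightarrow> w u > 0"
  shows "(\<Sum>u\<in>S. z u)\<^sup>2 \<le> (\<Sum>u\<in>S. 1 / w u) * (\<Sum>u\<in>S. w u * (z u)\<^sup>2)"
proof -
  have "(\<Sum>u\<in>S. z u) = (\<Sum>u\<in>S. (1 / sqrt (w u)) * (sqrt (w u) * z u))"
  proof (intro sum.cong refl)
    fix u assume "u \<in> S"
    then show "z u = 1 / sqrt (w u) * (sqrt (w u) * z u)" using assms[of u] by simp
  qed
  then have "(\<Sum>u\<in>S. z u)\<^sup>2 \<le> (\<Sum>u\<in>S. (1 / sqrt (w u))\<^sup>2) * (\<Sum>u\<in>S. (sqrt (w u) * z u)\<^sup>2)"
    using Cauchy_Schwarz_ineq_sum[of "\<lambda>u. 1 / sqrt (w u)" "\<lambda>u. sqrt (w u) * z u" S] by simp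
  also have "\<dots> = (\<Sum>u\<in>S. 1 / w u) * (\<Sum>u\<in>S. w u * (z u)\<^sup>2)"
    using assms by (intro arg_cong2[where f = "(*)"] sum.cong)
      (auto simp: power_divide power_mult_distrib less_imp_le)
  finally show ?thesis .
qed

text \<open>For the weights \<open>w\<close> on the right, Caro--Wei and the tangent bound give
  \<open>(1 - 1/k) \<Sum> 1/w \<le> 1\<close>; Cauchy--Schwarz applied to the Motzkin--Straus bound does the rest.\<close>

lemma adj_form_le_weighted:
  fixes y :: "'a \<Rightarrow> real"
  assumes fin: "finite S" and graph: "graph_on S E" and cl: "clique_number_le E S k" and "k \<ge> 2"
  shows "adj_form E S y \<le> (\<Sum>u\<in>S. (non_degree_in E S u + (1 - 2 / real k) * card S) * (y u)\<^sup>2)"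
proof -
  define w where "w u = real (non_degree_in E S u) + (1 - 2 / real k) * card S" for u
  have k: "real k \<ge> 2" using \<open>k \<ge> 2\<close> by simp
  have "1 - 2 / real k \<ge> 0" using k by (simp add: field_simps)
  then have w_pos: "w u > 0" if "u \<in> S" for u
    using non_degree_in_pos[OF fin that, of E] unfolding w_def by (intro add_pos_nonneg) auto
  have "(1 - 1 / real k) * (\<Sum>u\<in>S. 1 / w u) \<le> (1 - 1 / real k) * (real k / (real k - 1))"
    unfolding w_def using k caro_wei_bound[OF fin graph cl] non_degree_in_pos[OF fin]
    by (intro mult_left_mono sum_inverse_shifted_le[OF fin]) auto
  also have "\<dots> = 1" using k by (simp add: field_simps)
  finally have sum_w: "(1 - 1 / real k) * (\<Sum>u\<in>S. 1 / w u) \<le> 1" .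
  have "adj_form E S y \<le> adj_form E S (\<lambda>u. \<bar>y u\<bar>)" by (rule adj_form_le_abs)
  also have "\<dots> \<le> (1 - 1 / real k) * (\<Sum>u\<in>S. \<bar>y u\<bar>)\<^sup>2"
    using \<open>k \<ge> 2\<close> by (intro motzkin_straus[OF fin graph cl]) auto
  also have "\<dots> \<le> (1 - 1 / real k) * ((\<Sum>u\<in>S. 1 / w u) * (\<Sum>u\<in>S. w u * \<bar>y u\<bar>\<^sup>2))"
    using k w_pos by (intro mult_left_mono weighted_Cauchy_Schwarz) auto
  also have "\<dots> = ((1 - 1 / real k) * (\<Sum>u\<in>S. 1 / w u)) * (\<Sum>u\<in>S. w u * (y u)\<^sup>2)"
    by simp
  also have "\<dots> \<le> (\<Sum>u\<in>S. w u * (y u)\<^sup>2)"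
    using sum_w w_pos k by (intro mult_left_le_one_le mult_nonneg_nonneg sum_nonneg)
      (auto simp: less_imp_le field_simps)
  finally show ?thesis unfolding w_def .
qed

lemma signless_form_le_clique_number:
  fixes y :: "'a \<Rightarrow> real"
  assumes fin: "finite S" and graph: "graph_on S E" and cl: "clique_number_le E S k" and "k \<ge> 2"
  shows "signless_form E S y \<le> 4 * (1 - 1 / real k) * card S * (\<Sum>u\<in>S. (y u)\<^sup>2)"
proof -
  have "signless_form E S y
      \<le> 2 * (\<Sum>u\<in>S. (degree_in E S u + non_degree_in E S u + (1 - 2 / real k) * card S) * (y u)\<^sup>2)"
    using signless_form_expand[OF fin graph, of y] adj_form_le_weighted[OF assms, of y]
    by (simp add: sum.distrib distrib_right)
  also have "\<dots> = 2 * (\<Sum>u\<in>S. (2 * (1 - 1 / real k) * card S) * (y u)\<^sup>2)"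
    using degree_in_add_non_degree_in[OF fin graph]
    by (intro arg_cong[where f = "(*) 2"] sum.cong refl) (simp add: algebra_simps flip: of_nat_add)
  also have "\<dots> = 2 * ((2 * (1 - 1 / real k) * card S) * (\<Sum>u\<in>S. (y u)\<^sup>2))"
    by (simp only: sum_distrib_left)
  also have "\<dots> = 4 * (1 - 1 / real k) * card S * (\<Sum>u\<in>S. (y u)\<^sup>2)"
    by simp
  finally show ?thesis .
qed

lemma signless_form_le:
  fixes y :: "'a \<Rightarrow> real"
  assumes fin: "finite S" and graph: "graph_on S E"
  shows "signless_form E S y \<le> 4 * card S * (\<Sum>u\<in>S. (y u)\<^sup>2)"
proof -
  have "adj_form E S y \<le> (\<Sum>u\<in>S. \<Sum>v\<in>S. if E u v then ((y u)\<^sup>2 + (y v)\<^sup>2) / 2 else 0)"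
    unfolding adj_form_def
  proof (intro sum_mono)
    fix u v
    have "y u * y v \<le> ((y u)\<^sup>2 + (y v)\<^sup>2) / 2"
      using sum_squares_bound[of "y u" "y v"] by (simp add: power2_eq_square)
    then show "(if E u v then y u * y v else 0) \<le> (if E u v then ((y u)\<^sup>2 + (y v)\<^sup>2) / 2 else 0)"
      by simp
  qed
  also have "\<dots> = ((\<Sum>u\<in>S. \<Sum>v\<in>S. if E u v then (y u)\<^sup>2 else 0)
      + (\<Sum>u\<in>S. \<Sum>v\<in>S. if E u v then (y v)\<^sup>2 else 0)) / 2"
    by (simp add: sum_divide_distrib add_divide_distrib flip: sum.distrib) (intro sum.cong refl, auto)
  also have "\<dots> = (\<Sum>u\<in>S. real (degree_in E S u) * (y u)\<^sup>2)"
    using sum_adj_left[OF fin, of E "\<lambda>u. (y u)\<^sup>2"] sum_adj_right[OF fin graph, of "\<lambda>u. (y u)\<^sup>2"]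
    by simp
  finally have "signless_form E S y \<le> 4 * (\<Sum>u\<in>S. real (degree_in E S u) * (y u)\<^sup>2)"
    using signless_form_expand[OF fin graph, of y] by simp
  also have "\<dots> \<le> 4 * (\<Sum>u\<in>S. real (card S) * (y u)\<^sup>2)"
    using degree_in_le_card[OF fin] by (intro mult_left_mono sum_mono mult_right_mono) auto
  finally show ?thesis by (simp add: sum_distrib_left mult.assoc)
qed

section \<open>Double counting over subsets\<close>

lemma card_supersets:
  assumes "finite V" "T \<subseteq> V" "card T \<le> m"
  shows "card {M. M \<subseteq> V \<and> card M = m \<and> T \<subseteq> M} = (card V - card T) choose (m - card T)"
proof -
  have fin_T: "finite T" using assms(1,2) by (rule finite_subset[rotated])
  have "bij_betw (\<lambda>N. N \<union> T) {N. N \<subseteq> V - T \<and> card N = m - card T} {M. M \<subseteq> V \<and> card M = m \<and> T \<subseteq> M}"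
  proof (rule bij_betw_byWitness[where f' = "\<lambda>M. M - T"])
    show "(\<lambda>N. N \<union> T) ` {N. N \<subseteq> V - T \<and> card N = m - card T} \<subseteq> {M. M \<subseteq> V \<and> card M = m \<and> T \<subseteq> M}"
    proof clarify
      fix N assume N: "N \<subseteq> V - T" "card N = m - card T"
      then have "finite N" using assms(1) by (meson Diff_subset finite_subset subset_trans)
      moreover have "N \<inter> T = {}" using N(1) by auto
      ultimately show "N \<union> T \<subseteq> V \<and> card (N \<union> T) = m \<and> T \<subseteq> N \<union> T"
        using N assms(2,3) fin_T by (auto simp: card_Un_disjoint)
    qed
    show "(\<lambda>M. M - T) ` {M. M \<subseteq> V \<and> card M = m \<and> T \<subseteq> M} \<subseteq> {N. N \<subseteq> V - T \<and> card N = m - card T}"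
      using fin_T by (auto simp: card_Diff_subset)
  qed auto
  then have "card {M. M \<subseteq> V \<and> card M = m \<and> T \<subseteq> M} = card {N. N \<subseteq> V - T \<and> card N = m - card T}"
    by (simp add: bij_betw_same_card)
  also have "\<dots> = (card V - card T) choose (m - card T)"
    using assms by (simp add: n_subsets card_Diff_subset fin_T)
  finally show ?thesis .
qed

lemma sum_if_mem_eq_sum:
  "finite V \<Longrightarrow> M \<subseteq> V \<Longrightarrow> (\<Sum>u\<in>V. if u \<in> M then f u else 0) = (\<Sum>u\<in>M. f u)"
  using sum.inter_restrict[of V f M] by (simp add: Int_absorb1)

lemma sum_subsets_sum:
  fixes h :: "'a \<Rightarrow> real"
  assumes "finite V" "m \<ge> 1"
  shows "(\<Sum>M | M \<subseteq> V \<and> card M = m. \<Sum>u\<in>M. h u) = ((card V - 1) choose (m - 1)) * (\<Sum>u\<in>V. h u)"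
proof -
  let ?Ms = "{M. M \<subseteq> V \<and> card M = m}"
  have fin: "finite ?Ms" using assms(1) by (auto intro: finite_subset[of _ "Pow V"])
  have "(\<Sum>M\<in>?Ms. \<Sum>u\<in>M. h u) = (\<Sum>M\<in>?Ms. \<Sum>u\<in>V. if u \<in> M then h u else 0)"
    by (rule sum.cong[OF refl]) (simp add: sum_if_mem_eq_sum assms(1))
  also have "\<dots> = (\<Sum>u\<in>V. \<Sum>M\<in>?Ms. if u \<in> M then h u else 0)"
    by (rule sum.swap)
  also have "\<dots> = (\<Sum>u\<in>V. card {M\<in>?Ms. u \<in> M} * h u)"
    using fin by (simp add: sum.If_cases Int_def)
  also have "\<dots> = (\<Sum>u\<in>V. ((card V - 1) choose (m - 1)) * h u)"
  proof (intro sum.cong refl)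
    fix u assume "u \<in> V"
    moreover have "{M\<in>?Ms. u \<in> M} = {M. M \<subseteq> V \<and> card M = m \<and> {u} \<subseteq> M}" by auto
    ultimately show "card {M\<in>?Ms. u \<in> M} * h u = ((card V - 1) choose (m - 1)) * h u"
      using card_supersets[OF assms(1), of "{u}" m] assms(2) by simp
  qed
  finally show ?thesis by (simp add: sum_distrib_left)
qed

lemma sum_subsets_double_sum:
  fixes g :: "'a \<Rightarrow> 'a \<Rightarrow> real"
  assumes "finite V" "m \<ge> 2" "\<And>u. u \<in> V \<Longrightarrow> g u u = 0"
  shows "(\<Sum>M | M \<subseteq> V \<and> card M = m. \<Sum>u\<in>M. \<Sum>v\<in>M. g u v)
    = ((card V - 2) choose (m - 2)) * (\<Sum>u\<in>V. \<Sum>v\<in>V. g u v)"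
proof -
  let ?Ms = "{M. M \<subseteq> V \<and> card M = m}"
  have fin: "finite ?Ms" using assms(1) by (auto intro: finite_subset[of _ "Pow V"])
  have "(\<Sum>M\<in>?Ms. \<Sum>u\<in>M. \<Sum>v\<in>M. g u v)
      = (\<Sum>M\<in>?Ms. \<Sum>u\<in>V. \<Sum>v\<in>V. if u \<in> M \<and> v \<in> M then g u v else 0)"
  proof (rule sum.cong[OF refl])
    fix M assume "M \<in> ?Ms"
    then have "M \<subseteq> V" by simp
    have "(\<Sum>u\<in>V. \<Sum>v\<in>V. if u \<in> M \<and> v \<in> M then g u v else 0)
        = (\<Sum>u\<in>V. if u \<in> M then (\<Sum>v\<in>V. if v \<in> M then g u v else 0) else 0)"
      by (intro sum.cong refl) auto
    also have "\<dots> = (\<Sum>u\<in>M. \<Sum>v\<in>M. g u v)"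
      using assms(1) \<open>M \<subseteq> V\<close> by (simp add: sum_if_mem_eq_sum)
    finally show "(\<Sum>u\<in>M. \<Sum>v\<in>M. g u v) = (\<Sum>u\<in>V. \<Sum>v\<in>V. if u \<in> M \<and> v \<in> M then g u v else 0)" ..
  qed
  also have "\<dots> = (\<Sum>u\<in>V. \<Sum>v\<in>V. \<Sum>M\<in>?Ms. if u \<in> M \<and> v \<in> M then g u v else 0)"
    by (subst sum.swap) (rule sum.cong[OF refl], rule sum.swap)
  also have "\<dots> = (\<Sum>u\<in>V. \<Sum>v\<in>V. card {M\<in>?Ms. u \<in> M \<and> v \<in> M} * g u v)"
    using fin by (simp add: sum.If_cases Int_def)
  also have "\<dots> = (\<Sum>u\<in>V. \<Sum>v\<in>V. ((card V - 2) choose (m - 2)) * g u v)"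
  proof (intro sum.cong refl)
    fix u v assume uv: "u \<in> V" "v \<in> V"
    show "card {M\<in>?Ms. u \<in> M \<and> v \<in> M} * g u v = ((card V - 2) choose (m - 2)) * g u v"
    proof (cases "u = v")
      case False
      have "{M\<in>?Ms. u \<in> M \<and> v \<in> M} = {M. M \<subseteq> V \<and> card M = m \<and> {u, v} \<subseteq> M}" by auto
      then show ?thesis using card_supersets[OF assms(1), of "{u, v}" m] uv assms(2) False
        by (simp add: numeral_2_eq_2)
    qed (simp add: assms(3) uv)
  qed
  finally show ?thesis by (simp add: sum_distrib_left)
qed

lemma card_subsets_containing_clique_le:
  assumes "finite V" "k + 1 \<le> m"
  shows "card {M. M \<subseteq> V \<and> card M = m \<and> \<not> clique_number_le E M k}
    \<le> card {K. K \<subseteq> V \<and> card K = k + 1 \<and> clique E K} * ((card V - (k + 1)) choose (m - (k + 1)))"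
proof -
  define Cl where "Cl = {K. K \<subseteq> V \<and> card K = k + 1 \<and> clique E K}"
  define sup where "sup K = {M. M \<subseteq> V \<and> card M = m \<and> K \<subseteq> M}" for K
  have fin_Cl: "finite Cl" unfolding Cl_def using assms(1) by (auto intro: finite_subset[of _ "Pow V"])
  have "{M. M \<subseteq> V \<and> card M = m \<and> \<not> clique_number_le E M k} \<subseteq> (\<Union>K\<in>Cl. sup K)"
  proof
    fix M assume "M \<in> {M. M \<subseteq> V \<and> card M = m \<and> \<not> clique_number_le E M k}"
    then have M: "M \<subseteq> V" "card M = m" "\<not> clique_number_le E M k" by auto
    then obtain C where C: "C \<subseteq> M" "clique E C" "card C > k" unfolding clique_number_le_def by auto
    then obtain K where K: "K \<subseteq> C" "card K = k + 1"
      by (metis Suc_eq_plus1 Suc_leI obtain_subset_with_card_n)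
    then have "clique E K" using C(2) unfolding clique_def by blast
    then have "K \<in> Cl" "M \<in> sup K"
      using C M K unfolding Cl_def sup_def by auto
    then show "M \<in> (\<Union>K\<in>Cl. sup K)" by blast
  qed
  then have "card {M. M \<subseteq> V \<and> card M = m \<and> \<not> clique_number_le E M k} \<le> card (\<Union>K\<in>Cl. sup K)"
    using fin_Cl assms(1) by (intro card_mono) (auto simp: sup_def intro: finite_subset[of _ "Pow V"])
  also have "\<dots> \<le> (\<Sum>K\<in>Cl. card (sup K))" by (rule card_UN_le[OF fin_Cl])
  also have "\<dots> = (\<Sum>K\<in>Cl. (card V - (k + 1)) choose (m - (k + 1)))"
    using card_supersets[OF assms(1)] assms(2) unfolding Cl_def sup_def by (intro sum.cong) auto
  finally show ?thesis unfolding Cl_def by simp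
qed

section \<open>Eigenvectors of the signless Laplacian\<close>

lemma signless_laplacian_carrier: "signless_laplacian n E \<in> carrier_mat n n"
  unfolding signless_laplacian_def deg_matrix_def adj_matrix_def by auto

lemma signless_laplacian_index:
  "i < n \<Longrightarrow> j < n \<Longrightarrow> signless_laplacian n E $$ (i, j) =
     (if i = j then real (degree n E i) else 0) + (if E i j then 1 else 0)"
  unfolding signless_laplacian_def deg_matrix_def adj_matrix_def by auto

lemma real_symmetric_complex_eigenvalue_real:
  fixes Q :: "real mat" and a :: complex
  assumes Q: "Q \<in> carrier_mat n n"
    and sym: "\<And>i j. i < n \<Longrightarrow> j < n \<Longrightarrow> Q $$ (i, j) = Q $$ (j, i)"
    and ev: "eigenvalue (of_real_hom.mat_hom Q) a"
  shows "a \<in> \<real>"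
proof -
  define C :: "complex mat" where "C = of_real_hom.mat_hom Q"
  have C: "C \<in> carrier_mat n n" using Q unfolding C_def by auto
  obtain v where v: "v \<in> carrier_vec n" "v \<noteq> 0\<^sub>v n" "C *\<^sub>v v = a \<cdot>\<^sub>v v"
    using ev C unfolding C_def eigenvalue_def eigenvector_def by auto
  have row: "a * v $ i = (\<Sum>j<n. complex_of_real (Q $$ (i, j)) * v $ j)" if "i < n" for i
  proof -
    have "a * v $ i = (C *\<^sub>v v) $ i" using v that by simp
    also have "\<dots> = (\<Sum>j<n. complex_of_real (Q $$ (i, j)) * v $ j)"
      using that Q v(1) unfolding C_def
      by (auto simp: scalar_prod_def lessThan_atLeast0 intro!: sum.cong)
    finally show ?thesis .
  qed
  \<comment> \<open>the Hermitian form \<open>v\<^sup>* Q v\<close> is real and equals \<open>a \<parallel>v\<parallel>\<^sup>2\<close>\<close>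
  define s where "s = (\<Sum>i<n. \<Sum>j<n. cnj (v $ i) * complex_of_real (Q $$ (i, j)) * v $ j)"
  have "cnj s = (\<Sum>i<n. \<Sum>j<n. v $ i * complex_of_real (Q $$ (i, j)) * cnj (v $ j))"
    unfolding s_def by (simp add: cnj_sum)
  also have "\<dots> = (\<Sum>j<n. \<Sum>i<n. v $ i * complex_of_real (Q $$ (i, j)) * cnj (v $ j))"
    by (rule sum.swap)
  also have "\<dots> = s"
    unfolding s_def by (auto intro!: sum.cong simp: sym mult.commute mult.left_commute)
  finally have "s \<in> \<real>" by (metis Reals_cnj_iff)
  define R where "R = (\<Sum>i<n. (cmod (v $ i))\<^sup>2)"
  have "s = (\<Sum>i<n. cnj (v $ i) * (a * v $ i))"
    unfolding s_def by (auto simp: row sum_distrib_left mult.assoc intro!: sum.cong)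
  also have "\<dots> = (\<Sum>i<n. a * complex_of_real ((cmod (v $ i))\<^sup>2))"
    by (intro sum.cong refl) (metis complex_norm_square mult.commute mult.left_commute of_real_power)
  also have "\<dots> = a * complex_of_real R"
    unfolding R_def by (simp add: sum_distrib_left)
  finally have sR: "s = a * complex_of_real R" .
  obtain i where i: "i < n" "v $ i \<noteq> 0"
    using v(1,2) by (metis carrier_vecD eq_vecI index_zero_vec(1) index_zero_vec(2))
  have "R > 0" unfolding R_def by (rule sum_pos2[of _ i]) (use i in auto)
  then have "a = s / complex_of_real R" using sR by simp
  then show ?thesis using \<open>s \<in> \<real>\<close> by simp
qed

lemma real_symmetric_has_eigenvalue:
  fixes Q :: "real mat"
  assumes Q: "Q \<in> carrier_mat n n" and "n \<ge> 1"
    and sym: "\<And>i j. i < n \<Longrightarrow> j < n \<Longrightarrow> Q $$ (i, j) = Q $$ (j, i)"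
  shows "\<exists>r. eigenvalue Q r"
proof -
  define C :: "complex mat" where "C = of_real_hom.mat_hom Q"
  have C: "C \<in> carrier_mat n n" using Q unfolding C_def by auto
  obtain as where as: "char_poly C = (\<Prod>a\<leftarrow>as. [:- a, 1:])" "length as = n"
    using char_poly_factorized[OF C] by blast
  then have "poly (char_poly C) (as ! 0) = 0"
    using \<open>n \<ge> 1\<close> by (simp add: poly_prod_list_zero_iff)
  then have "eigenvalue C (as ! 0)" using eigenvalue_root_char_poly[OF C] by simp
  then obtain r where r: "as ! 0 = complex_of_real r"
    using real_symmetric_complex_eigenvalue_real[OF Q sym] unfolding C_def by (auto elim: Reals_cases)
  have "char_poly C = map_poly of_real (char_poly Q)"
    unfolding C_def by (rule of_real_hom.char_poly_hom[OF Q])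
  then have "poly (char_poly Q) r = 0"
    using \<open>poly (char_poly C) (as ! 0) = 0\<close> r by (metis of_real_eq_0_iff of_real_hom.poly_map_poly)
  then show ?thesis using eigenvalue_root_char_poly[OF Q] by blast
qed

lemma q_radius_eigenvalue:
  assumes "simple_graph n E" "n \<ge> 1"
  shows "eigenvalue (signless_laplacian n E) (q_radius n E)"
proof -
  let ?Q = "signless_laplacian n E"
  have Q: "?Q \<in> carrier_mat n n" by (rule signless_laplacian_carrier)
  have "char_poly ?Q \<noteq> 0" using degree_monic_char_poly[OF Q] by auto
  then have "finite {x. poly (char_poly ?Q) x = 0}" by (rule poly_roots_finite)
  then have fin: "finite {x. eigenvalue ?Q x}" using eigenvalue_root_char_poly[OF Q] by simp
  have "\<exists>r. eigenvalue ?Q r"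
    using assms by (intro real_symmetric_has_eigenvalue[OF Q])
      (auto simp: signless_laplacian_index simple_graph_def)
  then show ?thesis using Max_in[OF fin] unfolding q_radius_def by auto
qed

lemma degree_eq_degree_in: "degree n E i = degree_in E {0..<n} i"
  unfolding degree_def degree_in_def by (rule arg_cong[where f = card]) auto

lemma signless_laplacian_eigenvector:
  assumes "eigenvalue (signless_laplacian n E) q"
  obtains y :: "nat \<Rightarrow> real" where "(\<Sum>i\<in>{0..<n}. (y i)\<^sup>2) > 0"
    and "\<And>i. i \<in> {0..<n} \<Longrightarrow> q * y i = degree_in E {0..<n} i * y i + adj_sum E {0..<n} y i"
proof -
  let ?Q = "signless_laplacian n E"
  obtain x where x: "x \<in> carrier_vec n" "x \<noteq> 0\<^sub>v n" "?Q *\<^sub>v x = q \<cdot>\<^sub>v x"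
    using assms signless_laplacian_carrier[of n E] unfolding eigenvalue_def eigenvector_def by auto
  define y where "y i = x $ i" for i
  have "q * y i = degree_in E {0..<n} i * y i + adj_sum E {0..<n} y i" if "i \<in> {0..<n}" for i
  proof -
    have "q * y i = (?Q *\<^sub>v x) $ i" using x that unfolding y_def by simp
    also have "\<dots> = (\<Sum>j\<in>{0..<n}. ?Q $$ (i, j) * y j)"
      using that x(1) signless_laplacian_carrier[of n E] unfolding y_def
      by (auto simp: scalar_prod_def intro!: sum.cong)
    also have "\<dots> = (\<Sum>j\<in>{0..<n}. (if i = j then degree n E i * y j else 0) + (if E i j then y j else 0))"
      using that by (intro sum.cong) (auto simp: signless_laplacian_index distrib_right)
    also have "\<dots> = degree_in E {0..<n} i * y i + adj_sum E {0..<n} y i"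
      using that by (simp add: sum.distrib adj_sum_def degree_eq_degree_in)
    finally show ?thesis .
  qed
  moreover obtain i where "i < n" "x $ i \<noteq> 0"
    using x(1,2) by (metis carrier_vecD eq_vecI index_zero_vec(1) index_zero_vec(2))
  then have "(\<Sum>i\<in>{0..<n}. (y i)\<^sup>2) > 0" unfolding y_def by (intro sum_pos2[of _ i]) auto
  ultimately show ?thesis using that by blast
qed

lemma signless_form_eigenvector:
  fixes y :: "'a \<Rightarrow> real" and q :: real
  assumes "finite V" "graph_on V E"
    and "\<And>i. i \<in> V \<Longrightarrow> q * y i = degree_in E V i * y i + adj_sum E V y i"
  shows "signless_form E V y = 2 * q * (\<Sum>i\<in>V. (y i)\<^sup>2)"
proof -
  have "q * (\<Sum>i\<in>V. (y i)\<^sup>2) = (\<Sum>i\<in>V. y i * (q * y i))"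
    by (simp add: sum_distrib_left power2_eq_square mult_ac)
  also have "\<dots> = (\<Sum>i\<in>V. degree_in E V i * (y i)\<^sup>2) + adj_form E V y"
    using assms(3) by (simp add: adj_form_eq_sum_adj_sum power2_eq_square algebra_simps sum.distrib)
  finally show ?thesis using signless_form_expand[OF assms(1,2)] by simp
qed

section \<open>Counting cliques\<close>

lemma eigenvector_entry_bound:
  fixes y :: "'a \<Rightarrow> real" and q g :: real
  assumes "finite V" "i \<in> V" "q * y i = degree_in E V i * y i + adj_sum E V y i"
    and "g > 0" "g \<le> q - degree_in E V i"
  shows "(y i)\<^sup>2 \<le> card V * (\<Sum>j\<in>V. (y j)\<^sup>2) / g\<^sup>2"
proof -
  have "\<bar>adj_sum E V y i\<bar> \<le> (\<Sum>j\<in>V. \<bar>y j\<bar>)"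
    unfolding adj_sum_def by (rule order.trans[OF sum_abs]) (intro sum_mono, auto)
  then have "(adj_sum E V y i)\<^sup>2 \<le> (\<Sum>j\<in>V. \<bar>y j\<bar>)\<^sup>2"
    by (metis abs_ge_zero power2_abs power_mono)
  also have "\<dots> \<le> (\<Sum>j\<in>V. \<bar>y j\<bar>\<^sup>2) * card V" by (rule sum_squared_le_sum_of_squares)
  finally have "((q - degree_in E V i) * y i)\<^sup>2 \<le> card V * (\<Sum>j\<in>V. (y j)\<^sup>2)"
    using assms(3) by (simp add: algebra_simps)
  moreover have "g\<^sup>2 * (y i)\<^sup>2 \<le> ((q - degree_in E V i) * y i)\<^sup>2"
    using assms(4,5) by (simp add: power_mult_distrib mult_right_mono power_mono)
  ultimately show ?thesis using assms(4) by (simp add: field_simps)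
qed

lemma sum_signless_form_subsets_le:
  fixes y :: "'a \<Rightarrow> real"
  assumes fin: "finite V" and graph: "graph_on V E" and "k \<ge> 2" "m \<ge> 1"
    and entry: "\<And>u. u \<in> V \<Longrightarrow> (y u)\<^sup>2 \<le> b"
  shows "(\<Sum>M | M \<subseteq> V \<and> card M = m. signless_form E M y)
    \<le> 4 * (1 - 1 / k) * m * ((card V - 1) choose (m - 1)) * (\<Sum>u\<in>V. (y u)\<^sup>2)
      + 4 / k * m\<^sup>2 * b * card {M. M \<subseteq> V \<and> card M = m \<and> \<not> clique_number_le E M k}"
proof -
  let ?Ms = "{M. M \<subseteq> V \<and> card M = m}"
  let ?G = "{M. M \<subseteq> V \<and> card M = m \<and> \<not> clique_number_le E M k}"
  have fin_Ms: "finite ?Ms" using fin by (auto intro: finite_subset[of _ "Pow V"])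
  have "signless_form E M y
      \<le> 4 * (1 - 1 / k) * m * (\<Sum>u\<in>M. (y u)\<^sup>2) + (if M \<in> ?G then 4 / k * m\<^sup>2 * b else 0)"
    if M: "M \<in> ?Ms" for M
  proof -
    have "finite M" "graph_on M E" "card M = m"
      using M fin graph_on_subset[OF graph] by (auto intro: finite_subset)
    show ?thesis
    proof (cases "clique_number_le E M k")
      case True
      then show ?thesis
        using signless_form_le_clique_number[OF \<open>finite M\<close> \<open>graph_on M E\<close> _ \<open>k \<ge> 2\<close>] M by simp
    next
      case False
      have "(\<Sum>u\<in>M. (y u)\<^sup>2) \<le> m * b"
        using sum_bounded_above[of M "\<lambda>u. (y u)\<^sup>2" b] entry M \<open>card M = m\<close> by auto
      then have "4 / k * m * (\<Sum>u\<in>M. (y u)\<^sup>2) \<le> 4 / k * m * (m * b)"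
        by (intro mult_left_mono) auto
      then show ?thesis
        using signless_form_le[OF \<open>finite M\<close> \<open>graph_on M E\<close>, of y] False M \<open>card M = m\<close>
        by (simp add: algebra_simps power2_eq_square)
    qed
  qed
  then have "(\<Sum>M\<in>?Ms. signless_form E M y)
      \<le> (\<Sum>M\<in>?Ms. 4 * (1 - 1 / k) * m * (\<Sum>u\<in>M. (y u)\<^sup>2) + (if M \<in> ?G then 4 / k * m\<^sup>2 * b else 0))"
    by (rule sum_mono)
  also have "\<dots> = 4 * (1 - 1 / k) * m * (\<Sum>M\<in>?Ms. \<Sum>u\<in>M. (y u)\<^sup>2) + card ?G * (4 / k * m\<^sup>2 * b)"
  proof -
    have "?Ms \<inter> ?G = ?G" by auto
    then show ?thesis
      using sum.inter_restrict[OF fin_Ms, of "\<lambda>_. 4 / k * m\<^sup>2 * b" ?G]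
      by (simp add: sum.distrib sum_distrib_left)
  qed
  finally show ?thesis
    using sum_subsets_sum[OF fin \<open>m \<ge> 1\<close>, of "\<lambda>u. (y u)\<^sup>2"] by (simp add: mult_ac)
qed

lemma subset_count_ge_of_averaging:
  fixes n m k :: nat and \<epsilon> q G :: real
  assumes "2 \<le> m" "m \<le> n" "\<epsilon> > 0" "k \<ge> 2" "2 + 2 / \<epsilon> \<le> m"
    and q: "(1 - 1 / k + \<epsilon>) * (2 * n) \<le> q"
    and sum_bound: "((n - 2) choose (m - 2)) * (2 * q)
      \<le> 4 * (1 - 1 / k) * m * ((n - 1) choose (m - 1)) + 4 / k * m\<^sup>2 * G / (4 * \<epsilon>\<^sup>2 * n)"
  shows "2 * k * \<epsilon> ^ 3 * (n choose m) \<le> G"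
proof -
  define a where "a = 4 * (1 - 1 / real k)"
  define C1 where "C1 = real ((n - 1) choose (m - 1))"
  define C2 where "C2 = real ((n - 2) choose (m - 2))"
  have "real k \<ge> 2" using assms(4) by simp
  then have "0 \<le> a" "a \<le> 4" unfolding a_def by (simp_all add: field_simps)
  then have "a + 4 * \<epsilon> \<ge> 0" using assms(3) by simp
  have "n > 0" using assms(1,2) by simp
  have "(n - 1) * ((n - 2) choose (m - 2)) = ((n - 1) choose (m - 1)) * (m - 1)"
    using Suc_times_binomial_eq[of "n - 2" "m - 2"] assms(1,2) by (simp add: Suc_diff_Suc numeral_2_eq_2)
  then have pascal: "real (n - 1) * C2 = C1 * real (m - 1)"
    unfolding C1_def C2_def by (metis of_nat_mult)
  have absorb: "real n * C1 = real m * (n choose m)"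
    using Suc_times_binomial_eq[of "n - 1" "m - 1"] assms(1,2) unfolding C1_def
    by (simp add: mult.commute flip: of_nat_mult)
  have "C1 * (m - 1) * (a + 4 * \<epsilon>) \<le> C2 * n * (a + 4 * \<epsilon>)"
    using pascal \<open>a + 4 * \<epsilon> \<ge> 0\<close> \<open>n > 0\<close> unfolding C2_def
    by (intro mult_right_mono) (simp_all add: of_nat_diff algebra_simps)
  also have "\<dots> = C2 * (n * (a + 4 * \<epsilon>))" by simp
  also have "\<dots> \<le> C2 * (2 * q)"
  proof -
    have "n * (a + 4 * \<epsilon>) = 2 * ((1 - 1 / k + \<epsilon>) * (2 * n))"
      unfolding a_def by (simp add: algebra_simps)
    then show ?thesis using q unfolding C2_def by (intro mult_left_mono) (linarith, simp)
  qed
  finally have "C1 * ((m - 1) * (a + 4 * \<epsilon>) - a * m) \<le> m\<^sup>2 * G / (k * \<epsilon>\<^sup>2 * n)"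
    using sum_bound assms(3) unfolding a_def C1_def C2_def by (simp add: field_simps)
  moreover have "2 * \<epsilon> * m \<le> (m - 1) * (a + 4 * \<epsilon>) - a * m"
    using assms(1,3,5) \<open>a \<le> 4\<close> by (simp add: field_simps of_nat_diff)
  then have "C1 * (2 * \<epsilon> * m) \<le> C1 * ((m - 1) * (a + 4 * \<epsilon>) - a * m)"
    unfolding C1_def by (rule mult_left_mono) simp
  ultimately have "C1 * (2 * \<epsilon> * m) \<le> m\<^sup>2 * G / (k * \<epsilon>\<^sup>2 * n)" by linarith
  then have "2 * k * \<epsilon> ^ 3 * (n * C1) \<le> m * G"
    using assms(1,3,4) \<open>n > 0\<close> by (simp add: field_simps power2_eq_square power3_eq_cube)
  then have "m * (2 * k * \<epsilon> ^ 3 * (n choose m)) \<le> m * G"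
    unfolding absorb by (simp add: mult_ac)
  then show ?thesis using assms(1) by simp
qed

lemma many_subsets_contain_clique:
  fixes y :: "'a \<Rightarrow> real" and q \<epsilon> :: real
  assumes fin: "finite V" and graph: "graph_on V E" and "k \<ge> 2" "\<epsilon> > 0"
    and m: "2 \<le> m" "m \<le> card V" "2 + 2 / \<epsilon> \<le> m"
    and y: "(\<Sum>u\<in>V. (y u)\<^sup>2) > 0" "\<And>u. u \<in> V \<Longrightarrow> q * y u = degree_in E V u * y u + adj_sum E V y u"
    and q: "(1 - 1 / k + \<epsilon>) * (2 * card V) \<le> q"
  shows "2 * k * \<epsilon> ^ 3 * (card V choose m) \<le> card {M. M \<subseteq> V \<and> card M = m \<and> \<not> clique_number_le E M k}"
proof -
  define n where "n = card V"
  define X where "X = (\<Sum>u\<in>V. (y u)\<^sup>2)"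
  define G where "G = card {M. M \<subseteq> V \<and> card M = m \<and> \<not> clique_number_le E M k}"
  have "n > 0" using m unfolding n_def by simp
  have entry: "(y u)\<^sup>2 \<le> X / (4 * \<epsilon>\<^sup>2 * n)" if "u \<in> V" for u
  proof -
    have "1 / 2 \<le> 1 - 1 / real k" using \<open>k \<ge> 2\<close> by (simp add: field_simps)
    then have "1 / 2 * (2 * real n) \<le> (1 - 1 / real k) * (2 * real n)" by (rule mult_right_mono) simp
    then have "2 * \<epsilon> * n \<le> q - degree_in E V u"
      using q degree_in_le_card[OF fin, of E u] unfolding n_def by (simp add: algebra_simps)
    then have "(y u)\<^sup>2 \<le> n * X / (2 * \<epsilon> * n)\<^sup>2"
      using eigenvector_entry_bound[OF fin that y(2)[OF that]] \<open>\<epsilon> > 0\<close> \<open>n > 0\<close>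
      unfolding n_def X_def by simp
    then show ?thesis using \<open>n > 0\<close> by (simp add: power2_eq_square field_simps)
  qed
  have "((n - 2) choose (m - 2)) * (2 * q * X) = (\<Sum>M | M \<subseteq> V \<and> card M = m. signless_form E M y)"
    using sum_subsets_double_sum[OF fin \<open>2 \<le> m\<close>] graph signless_form_eigenvector[OF fin graph y(2)]
    unfolding signless_form_def graph_on_def n_def X_def by simp
  also have "\<dots> \<le> 4 * (1 - 1 / k) * m * ((n - 1) choose (m - 1)) * X + 4 / k * m\<^sup>2 * (X / (4 * \<epsilon>\<^sup>2 * n)) * G"
    using sum_signless_form_subsets_le[OF fin graph \<open>k \<ge> 2\<close> _ entry] m unfolding n_def X_def G_def by simp
  finally have "(((n - 2) choose (m - 2)) * (2 * q)) * X
      \<le> (4 * (1 - 1 / k) * m * ((n - 1) choose (m - 1)) + 4 / k * m\<^sup>2 * G / (4 * \<epsilon>\<^sup>2 * n)) * X"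
    by (simp add: algebra_simps)
  then have "((n - 2) choose (m - 2)) * (2 * q)
      \<le> 4 * (1 - 1 / k) * m * ((n - 1) choose (m - 1)) + 4 / k * m\<^sup>2 * G / (4 * \<epsilon>\<^sup>2 * n)"
    using y(1) unfolding X_def by simp
  then show ?thesis
    using subset_count_ge_of_averaging[OF m(1) _ \<open>\<epsilon> > 0\<close> \<open>k \<ge> 2\<close> m(3)] q m(2)
    unfolding n_def G_def by simp
qed

lemma clique_count_ge_of_subsets:
  fixes \<delta> :: real
  assumes "k + 1 \<le> m" "m \<le> n"
    and "\<delta> * (n choose m) \<le> card {M. M \<subseteq> {0..<n} \<and> card M = m \<and> \<not> clique_number_le E M k}"
  shows "\<delta> * (n choose (k + 1)) \<le> clique_count n E (k + 1) * (m choose (k + 1))"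
proof -
  define C3 where "C3 = real ((n - (k + 1)) choose (m - (k + 1)))"
  have "C3 > 0" using assms(1,2) unfolding C3_def by simp
  have "card {M. M \<subseteq> {0..<n} \<and> card M = m \<and> \<not> clique_number_le E M k}
      \<le> clique_count n E (k + 1) * ((n - (k + 1)) choose (m - (k + 1)))"
    using card_subsets_containing_clique_le[of "{0..<n}" k m E] assms(1)
    unfolding clique_count_def clique_def by simp
  then have "\<delta> * (n choose m) * (m choose (k + 1)) \<le> clique_count n E (k + 1) * C3 * (m choose (k + 1))"
    using assms(3) unfolding C3_def by (intro mult_right_mono) (simp_all flip: of_nat_mult)
  moreover have "real (n choose m) * (m choose (k + 1)) = (n choose (k + 1)) * C3"
    using choose_mult[OF assms(1,2)] unfolding C3_def by (simp flip: of_nat_mult)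
  ultimately have "(\<delta> * (n choose (k + 1))) * C3 \<le> (clique_count n E (k + 1) * (m choose (k + 1))) * C3"
    by (simp add: mult_ac)
  then show ?thesis using \<open>C3 > 0\<close> by simp
qed

lemma clique_count_ge_power:
  fixes \<epsilon> :: real
  assumes "k \<ge> 2" "\<epsilon> > 0" "k + 1 \<le> m" "2 + 2 / \<epsilon> \<le> m" "m \<le> n"
    and graph: "simple_graph n E" and q: "(1 - 1 / k + \<epsilon>) * (2 * n) \<le> q_radius n E"
  shows "2 * real k * \<epsilon> ^ 3 * (real n / (real k + 1)) ^ (k + 1)
    \<le> real (clique_count n E (k + 1)) * real (m choose (k + 1))"
proof -
  have "n \<ge> 1" "m \<ge> 2" using assms(1,3,5) by simp_all
  obtain y :: "nat \<Rightarrow> real" where y: "(\<Sum>i\<in>{0..<n}. (y i)\<^sup>2) > 0"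
    "\<And>i. i \<in> {0..<n} \<Longrightarrow> q_radius n E * y i = degree_in E {0..<n} i * y i + adj_sum E {0..<n} y i"
    using signless_laplacian_eigenvector[OF q_radius_eigenvalue[OF graph \<open>n \<ge> 1\<close>]] by blast
  have "2 * real k * \<epsilon> ^ 3 * (card {0..<n} choose m)
      \<le> card {M. M \<subseteq> {0..<n} \<and> card M = m \<and> \<not> clique_number_le E M k}"
    by (rule many_subsets_contain_clique[OF _ graph_on_simple_graph[OF graph] assms(1,2) \<open>m \<ge> 2\<close> _ assms(4) y])
      (use assms(5) q in simp_all)
  then have "2 * real k * \<epsilon> ^ 3 * (n choose (k + 1))
      \<le> real (clique_count n E (k + 1)) * real (m choose (k + 1))"
    using clique_count_ge_of_subsets[OF assms(3,5), of "2 * real k * \<epsilon> ^ 3" E] by simp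
  moreover have "2 * real k * \<epsilon> ^ 3 * (real n / (real k + 1)) ^ (k + 1)
      \<le> 2 * real k * \<epsilon> ^ 3 * (n choose (k + 1))"
    using binomial_ge_n_over_k_pow_k[where 'a = real, of "k + 1" n] assms(2,3,5)
    by (intro mult_left_mono) (auto simp: add.commute)
  ultimately show ?thesis by linarith
qed

theorem theorem2p2:
  fixes k :: nat and \<epsilon> :: real
  assumes "k \<ge> 2" and "\<epsilon> > 0"
  shows "\<exists>c::real. c > 0 \<and> (\<exists>n0::nat. \<forall>n \<ge> n0. \<forall>E :: nat \<Rightarrow> nat \<Rightarrow> bool.
           simple_graph n E \<longrightarrow>
           q_radius n E \<ge> (1 - 1 / real k + \<epsilon>) * (2 * real n) \<longrightarrow>
           real (clique_count n E (k + 1)) \<ge> c * real n ^ (k + 1))"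
proof -
  define m :: nat where "m = k + 1 + nat \<lceil>2 + 2 / \<epsilon>\<rceil>"
  define c where "c = 2 * real k * \<epsilon> ^ 3 / ((real k + 1) ^ (k + 1) * real (m choose (k + 1)))"
  have m: "k + 1 \<le> m" "2 + 2 / \<epsilon> \<le> m" unfolding m_def by linarith+
  have "c > 0" unfolding c_def using assms m(1) by (intro divide_pos_pos mult_pos_pos zero_less_power) auto
  moreover have "c * real n ^ (k + 1) \<le> clique_count n E (k + 1)"
    if "m \<le> n" "simple_graph n E" "(1 - 1 / k + \<epsilon>) * (2 * n) \<le> q_radius n E" for n E
  proof -
    have "c * real n ^ (k + 1) = 2 * real k * \<epsilon> ^ 3 * (real n / (real k + 1)) ^ (k + 1) / (m choose (k + 1))"
      unfolding c_def by (simp add: power_divide)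
    also have "\<dots> \<le> clique_count n E (k + 1)"
      using clique_count_ge_power[OF assms m that] m(1) by (simp add: pos_divide_le_eq mult_ac)
    finally show ?thesis .
  qed
  ultimately show ?thesis by (intro exI[of _ c] conjI exI[of _ m]) auto
qed

end
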